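(* Let $d>k\geq1$ be integers, let $\beta>0$ and $\lambda_k>2\sqrt{\beta}$, and let $A:=\mathrm{diag}(\lambda_k,\dots,\lambda_k,2\sqrt\beta,\dots,2\sqrt\beta)\in\mathbb{R}^{d\times d}$, with $\lambda_k$ repeated $k$ times and $2\sqrt\beta$ repeated $d-k$ times. Let $U_k\in\mathbb{R}^{d\times k}$ be the matrix of the first $k$ standard basis vectors and $U_{-k}\in\mathbb{R}^{d\times(d-k)}$ that of the last $d-k$ standard basis vectors. Let $\varepsilon\in(0,1)$. Then there exist $X_0\in\mathrm{St}(d,k)$ with $\cos\theta_k(U_k,X_0)>0$ and perturbations $(\Xi_t)_{t\geq0}\subset\mathbb{R}^{d\times k}$ satisfying, for all $t\geq0$, $U_k^\top\Xi_t=0$ and $\|U_{-k}^\top\Xi_t\|_2\leq 8(\lambda_k-2\sqrt\beta)\varepsilon$, such that the ANPM iterates $(X_t)_{t\geq0}$ on $A$ with momentum $\beta$ and these perturbations satisfy $\tan\theta_k(U_k,X_t)>\varepsilon$ for all $t\geq0$.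
   Context: $\mathrm{St}(d,k):=\{X\in\mathbb{R}^{d\times k}:X^\top X=I_k\}$. For $Y\in\mathbb{R}^{d\times k}$, $\mathrm{QR}(Y)$ is the pair $(X,R)$ with $Y=XR$, $X\in\mathrm{St}(d,k)$, $R$ upper triangular $k\times k$ with nonnegative diagonal (unique, $R$ invertible, when $Y$ has full column rank). For $U,X\in\mathrm{St}(d,k)$, $\theta_k(U,X):=\arccos\sigma_{\min}(U^\top X)\in[0,\pi/2]$. ANPM with momentum $\beta$ and perturbations $(\Xi_t)$: given $X_0\in\mathrm{St}(d,k)$, $(X_1,R_1)=\mathrm{QR}(\tfrac12 AX_0+\Xi_0)$, and for $t\geq1$, $Y_{t+1}=AX_t-\beta X_{t-1}R_t^{-1}+\Xi_t$, $(X_{t+1},R_{t+1})=\mathrm{QR}(Y_{t+1})$. *)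

theory Defs
  imports Complex_Main "Jordan_Normal_Form.Matrix"
begin

definition vnorm :: "real vec \<Rightarrow> real" where
  "vnorm v = sqrt (v \<bullet> v)"

definition opnorm2 :: "real mat \<Rightarrow> real" where
  "opnorm2 M = Sup {vnorm (M *\<^sub>v v) | v. v \<in> carrier_vec (dim_col M) \<and> vnorm v = 1}"

definition sigma_min :: "real mat \<Rightarrow> real" where
  "sigma_min M = Inf {vnorm (M *\<^sub>v v) | v. v \<in> carrier_vec (dim_col M) \<and> vnorm v = 1}"

definition stiefel :: "nat \<Rightarrow> nat \<Rightarrow> real mat set" where
  "stiefel d k = {X. X \<in> carrier_mat d k \<and> transpose_mat X * X = 1\<^sub>m k}"

definition theta :: "real mat \<Rightarrow> real mat \<Rightarrow> real" where
  "theta U X = arccos (sigma_min (transpose_mat U * X))"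

definition full_col_rank :: "real mat \<Rightarrow> bool" where
  "full_col_rank Y \<longleftrightarrow> (\<forall>v \<in> carrier_vec (dim_col Y). Y *\<^sub>v v = 0\<^sub>v (dim_row Y) \<longrightarrow> v = 0\<^sub>v (dim_col Y))"

definition is_qr :: "real mat \<Rightarrow> real mat \<Rightarrow> real mat \<Rightarrow> bool" where
  "is_qr Y X R \<longleftrightarrow> X \<in> stiefel (dim_row Y) (dim_col Y) \<and> R \<in> carrier_mat (dim_col Y) (dim_col Y)
     \<and> (\<forall>i j. j < i \<and> i < dim_col Y \<longrightarrow> R $$ (i,j) = 0)
     \<and> (\<forall>i < dim_col Y. R $$ (i,i) \<ge> 0) \<and> Y = X * R"

definition QR :: "real mat \<Rightarrow> real mat \<times> real mat" where
  "QR Y = (THE p. is_qr Y (fst p) (snd p))"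

definition minv :: "real mat \<Rightarrow> real mat" where
  "minv R = (THE S. S \<in> carrier_mat (dim_row R) (dim_row R) \<and> R * S = 1\<^sub>m (dim_row R) \<and> S * R = 1\<^sub>m (dim_row R))"

(* anpm_aux A beta X0 Xi t = ((X_t, R_t), (X_{t+1}, R_{t+1})); R_0 is unused *)
primrec anpm_aux :: "real mat \<Rightarrow> real \<Rightarrow> real mat \<Rightarrow> (nat \<Rightarrow> real mat) \<Rightarrow> nat
    \<Rightarrow> (real mat \<times> real mat) \<times> (real mat \<times> real mat)" where
  "anpm_aux A \<beta> X0 \<Xi> 0 = ((X0, undefined), QR ((1/2) \<cdot>\<^sub>m (A * X0) + \<Xi> 0))"
| "anpm_aux A \<beta> X0 \<Xi> (Suc t) =
     (let Xp = fst (fst (anpm_aux A \<beta> X0 \<Xi> t)); Xc = fst (snd (anpm_aux A \<beta> X0 \<Xi> t));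
          Rc = snd (snd (anpm_aux A \<beta> X0 \<Xi> t))
      in ((Xc, Rc), QR (A * Xc - \<beta> \<cdot>\<^sub>m (Xp * minv Rc) + \<Xi> (Suc t))))"

definition anpm_X :: "real mat \<Rightarrow> real \<Rightarrow> real mat \<Rightarrow> (nat \<Rightarrow> real mat) \<Rightarrow> nat \<Rightarrow> real mat" where
  "anpm_X A \<beta> X0 \<Xi> t = fst (fst (anpm_aux A \<beta> X0 \<Xi> t))"

(* pre-orthonormalisation matrix Y_{t+1} (so anpm_Y ... 0 = Y_1) *)
definition anpm_Y :: "real mat \<Rightarrow> real \<Rightarrow> real mat \<Rightarrow> (nat \<Rightarrow> real mat) \<Rightarrow> nat \<Rightarrow> real mat" where
  "anpm_Y A \<beta> X0 \<Xi> t = (if t = 0 then (1/2) \<cdot>\<^sub>m (A * X0) + \<Xi> 0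
     else (let p = anpm_aux A \<beta> X0 \<Xi> (t - 1) in
           A * fst (snd p) - \<beta> \<cdot>\<^sub>m (fst (fst p) * minv (snd (snd p))) + \<Xi> t))"

definition diagA :: "nat \<Rightarrow> nat \<Rightarrow> real \<Rightarrow> real \<Rightarrow> real mat" where
  "diagA d k lam \<beta> = mat d d (\<lambda>(i,j). if i = j then (if i < k then lam else 2 * sqrt \<beta>) else 0)"

definition Utop :: "nat \<Rightarrow> nat \<Rightarrow> real mat" where
  "Utop d k = mat d k (\<lambda>(i,j). if i = j then 1 else 0)"

definition Ubot :: "nat \<Rightarrow> nat \<Rightarrow> real mat" where
  "Ubot d k = mat d (d - k) (\<lambda>(i,j). if i = j + k then 1 else 0)"

end

theory Submission
  imports Defs
begin

text \<open>
  The witness is a fixed point of ANPM. Tilt the first column of \<open>U\<^sub>k\<close> by the angle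
  \<open>\<phi> = arctan (2 \<epsilon>)\<close> towards \<open>e\<^sub>k\<^sub>+\<^sub>1\<close>. On that direction \<open>A\<close> acts by \<open>2 sqrt \<beta>\<close> instead
  of \<open>\<lambda>\<^sub>k\<close>, and a perturbation of size \<open>(\<lambda>\<^sub>k - 2 sqrt \<beta>) sin \<phi>\<close> in the
  \<open>(k+1, 1)\<close> entry makes up the difference, so that \<open>A X\<^sub>0 + \<Xi> = \<lambda>\<^sub>k X\<^sub>0\<close>.
  Hence every \<open>Y\<^sub>t\<^sub>+\<^sub>1\<close> is the multiple \<open>r\<^sub>t X\<^sub>0\<close> with \<open>r\<^sub>t\<^sub>+\<^sub>1 = \<lambda>\<^sub>k - \<beta> / r\<^sub>t\<close>,
  which stays above \<open>sqrt \<beta>\<close>; QR returns \<open>X\<^sub>0\<close> every time and \<open>tan \<theta>\<^sub>k = 2 \<epsilon>\<close> forever.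
\<close>

lemma smult_smult_mat: "a \<cdot>\<^sub>m (b \<cdot>\<^sub>m A) = (a * b) \<cdot>\<^sub>m (A :: 'a :: semigroup_mult mat)"
  by (rule eq_matI) (auto simp: mult.assoc)

lemma one_smult_mat [simp]: "(1 :: 'a :: monoid_mult) \<cdot>\<^sub>m A = A"
  by (rule eq_matI) auto

lemma mult_smult_one_mat:
  assumes "A \<in> carrier_mat n k"
  shows "A * (c \<cdot>\<^sub>m 1\<^sub>m k) = c \<cdot>\<^sub>m (A :: 'a :: comm_semiring_1 mat)"
  using mult_smult_distrib[OF assms one_carrier_mat] assms by simp

lemma index_mult_mat_sum:
  assumes "A \<in> carrier_mat n m" "B \<in> carrier_mat m p" "i < n" "j < p"
  shows "(A * B) $$ (i,j) = (\<Sum>l<m. A $$ (i,l) * B $$ (l,j))"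
  using assms by (simp add: scalar_prod_def atLeast0LessThan)

lemma upper_triangular_gram_smult_one:
  fixes R :: "real mat"
  assumes R: "R \<in> carrier_mat k k" and c: "c > 0"
    and upper: "\<And>i j. j < i \<Longrightarrow> i < k \<Longrightarrow> R $$ (i,j) = 0"
    and diag_nonneg: "\<And>i. i < k \<Longrightarrow> R $$ (i,i) \<ge> 0"
    and gram: "transpose_mat R * R = (c * c) \<cdot>\<^sub>m 1\<^sub>m k"
  shows "R = c \<cdot>\<^sub>m 1\<^sub>m k"
proof -
  have gram_index: "(\<Sum>l<k. R $$ (l,i) * R $$ (l,j)) = (if i = j then c * c else 0)"
    if "i < k" "j < k" for i j
    using arg_cong[OF gram, of "\<lambda>M. M $$ (i,j)"] index_mult_mat_sum[of "transpose_mat R" k k R k i j]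
      R that by (cases "i = j") simp_all
  have "\<forall>j<k. R $$ (i,j) = (if i = j then c else 0)" if "i < k" for i
    using that
  proof (induction i rule: less_induct)
    case (less i)
    \<comment> \<open>rows above \<open>i\<close> are already known, rows below vanish by triangularity\<close>
    have column_i: "R $$ (l,i) = 0" if "l < k" "l \<noteq> i" for l
      using less.IH[of l] less.prems upper[of i l] that by (cases "l < i") auto
    have row_i: "R $$ (i,i) * R $$ (i,j) = (if i = j then c * c else 0)" if "j < k" for j
    proof -
      have "(\<Sum>l<k. R $$ (l,i) * R $$ (l,j)) = R $$ (i,i) * R $$ (i,j)"
        using less.prems column_i by (subst sum.remove[of _ i]) auto
      then show ?thesis using gram_index[OF less.prems that] by simp
    qed
    have diag: "R $$ (i,i) = c"
      using row_i[OF less.prems] diag_nonneg[OF less.prems] c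
      by (metis power2_eq_iff_nonneg power2_eq_square less_imp_le)
    show ?case
    proof (intro allI impI)
      fix j assume "j < k"
      then show "R $$ (i,j) = (if i = j then c else 0)"
        using row_i[of j] diag c by (cases "i = j") auto
    qed
  qed
  then show ?thesis
    using R by (intro eq_matI) auto
qed

lemma stiefel_gram_mult:
  assumes X: "X \<in> stiefel d k" and R: "R \<in> carrier_mat k m"
  shows "transpose_mat (X * R) * (X * R) = transpose_mat R * R"
proof -
  have Xc: "X \<in> carrier_mat d k" and orth: "transpose_mat X * X = 1\<^sub>m k"
    using X by (auto simp: stiefel_def)
  have "transpose_mat (X * R) * (X * R) = (transpose_mat R * transpose_mat X) * (X * R)"
    using Xc R by (simp add: transpose_mult)
  also have "\<dots> = transpose_mat R * ((transpose_mat X * X) * R)"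
    using Xc R by (simp add: assoc_mult_mat[of _ m k _ d _ m])
  finally show ?thesis
    using orth R by simp
qed

lemma is_qr_smult_stiefel_unique:
  assumes X: "X \<in> stiefel d k" and c: "c > 0" and qr: "is_qr (c \<cdot>\<^sub>m X) Q R"
  shows "Q = X \<and> R = c \<cdot>\<^sub>m 1\<^sub>m k"
proof -
  have Xc: "X \<in> carrier_mat d k"
    using X by (simp add: stiefel_def)
  then have dims: "dim_row (c \<cdot>\<^sub>m X) = d" "dim_col (c \<cdot>\<^sub>m X) = k"
    by auto
  have Q: "Q \<in> stiefel d k" and Rc: "R \<in> carrier_mat k k"
    and upper: "\<And>i j. j < i \<Longrightarrow> i < k \<Longrightarrow> R $$ (i,j) = 0"
    and diag: "\<And>i. i < k \<Longrightarrow> R $$ (i,i) \<ge> 0" and factor: "c \<cdot>\<^sub>m X = Q * R"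
    using qr unfolding is_qr_def dims by auto
  have scaled: "c \<cdot>\<^sub>m X = X * (c \<cdot>\<^sub>m 1\<^sub>m k)"
    using mult_smult_one_mat[OF Xc] by simp
  have "transpose_mat R * R = transpose_mat (Q * R) * (Q * R)"
    using stiefel_gram_mult[OF Q Rc] by simp
  also have "\<dots> = transpose_mat (X * (c \<cdot>\<^sub>m 1\<^sub>m k)) * (X * (c \<cdot>\<^sub>m 1\<^sub>m k))"
    by (simp only: factor[symmetric] scaled[symmetric])
  also have "\<dots> = transpose_mat (c \<cdot>\<^sub>m 1\<^sub>m k) * (c \<cdot>\<^sub>m 1\<^sub>m k)"
    by (rule stiefel_gram_mult[OF X, of _ k]) simp
  also have "\<dots> = (c \<cdot>\<^sub>m 1\<^sub>m k) * (c \<cdot>\<^sub>m 1\<^sub>m k)"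
    by (rule arg_cong[of _ _ "\<lambda>M. M * _"]) (rule eq_matI, auto)
  also have "\<dots> = (c * c) \<cdot>\<^sub>m 1\<^sub>m k"
    using mult_smult_one_mat[of "c \<cdot>\<^sub>m 1\<^sub>m k" k k c] by (simp add: smult_smult_mat)
  finally have R: "R = c \<cdot>\<^sub>m 1\<^sub>m k"
    using upper_triangular_gram_smult_one[OF Rc c upper diag] by simp
  have "c \<cdot>\<^sub>m X = Q * (c \<cdot>\<^sub>m 1\<^sub>m k)"
    by (simp only: factor R)
  also have "\<dots> = c \<cdot>\<^sub>m Q"
    using Q by (intro mult_smult_one_mat[of _ d]) (simp add: stiefel_def)
  finally have "(1 / c) \<cdot>\<^sub>m (c \<cdot>\<^sub>m X) = (1 / c) \<cdot>\<^sub>m (c \<cdot>\<^sub>m Q)"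
    by simp
  then show ?thesis
    using c R by (simp add: smult_smult_mat)
qed

lemma QR_smult_stiefel:
  assumes X: "X \<in> stiefel d k" and c: "c > 0"
  shows "QR (c \<cdot>\<^sub>m X) = (X, c \<cdot>\<^sub>m 1\<^sub>m k)"
  unfolding QR_def
proof (rule the_equality)
  have "X \<in> carrier_mat d k"
    using X by (simp add: stiefel_def)
  then show "is_qr (c \<cdot>\<^sub>m X) (fst (X, c \<cdot>\<^sub>m 1\<^sub>m k)) (snd (X, c \<cdot>\<^sub>m 1\<^sub>m k))"
    unfolding is_qr_def using X c by (simp add: mult_smult_one_mat)
next
  fix p
  assume "is_qr (c \<cdot>\<^sub>m X) (fst p) (snd p)"
  then show "p = (X, c \<cdot>\<^sub>m 1\<^sub>m k)"
    using is_qr_smult_stiefel_unique[OF X c] by (simp add: prod_eq_iff)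
qed

lemma minv_smult_one:
  assumes c: "c \<noteq> (0 :: real)"
  shows "minv (c \<cdot>\<^sub>m 1\<^sub>m k) = (1 / c) \<cdot>\<^sub>m 1\<^sub>m k"
proof -
  have inverse: "c \<cdot>\<^sub>m 1\<^sub>m k * ((1 / c) \<cdot>\<^sub>m 1\<^sub>m k) = 1\<^sub>m k" "(1 / c) \<cdot>\<^sub>m 1\<^sub>m k * (c \<cdot>\<^sub>m 1\<^sub>m k) = 1\<^sub>m k"
    using c mult_smult_one_mat[of "c \<cdot>\<^sub>m 1\<^sub>m k" k k "1 / c"]
      mult_smult_one_mat[of "(1 / c) \<cdot>\<^sub>m 1\<^sub>m k" k k c] by (simp_all add: smult_smult_mat)
  have unique: "S = (1 / c) \<cdot>\<^sub>m 1\<^sub>m k" if S: "S \<in> carrier_mat k k" and "S * (c \<cdot>\<^sub>m 1\<^sub>m k) = 1\<^sub>m k" for S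
  proof -
    have "c \<cdot>\<^sub>m S = 1\<^sub>m k"
      using that mult_smult_one_mat[OF S] by simp
    then have "(1 / c) \<cdot>\<^sub>m (c \<cdot>\<^sub>m S) = (1 / c) \<cdot>\<^sub>m 1\<^sub>m k"
      by simp
    then show ?thesis
      using c by (simp add: smult_smult_mat)
  qed
  show ?thesis
    unfolding minv_def using inverse unique by (intro the_equality) auto
qed

lemma full_col_rank_if_left_inverse:
  assumes Y: "Y \<in> carrier_mat n k" and L: "L \<in> carrier_mat k n" and inverse: "L * Y = 1\<^sub>m k"
  shows "full_col_rank Y"
  unfolding full_col_rank_def
proof (intro ballI impI)
  fix v assume v: "v \<in> carrier_vec (dim_col Y)" and "Y *\<^sub>v v = 0\<^sub>v (dim_row Y)"
  then have "L *\<^sub>v (Y *\<^sub>v v) = 0\<^sub>v k"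
    using Y L by auto
  moreover have "L *\<^sub>v (Y *\<^sub>v v) = v"
    using Y L v inverse by (simp add: assoc_mult_mat_vec[symmetric, of L k n Y k v])
  ultimately show "v = 0\<^sub>v (dim_col Y)"
    using Y by simp
qed

lemma full_col_rank_smult_stiefel:
  assumes X: "X \<in> stiefel d k" and c: "c \<noteq> 0"
  shows "full_col_rank (c \<cdot>\<^sub>m X)"
proof (rule full_col_rank_if_left_inverse)
  have Xc: "X \<in> carrier_mat d k" and orth: "transpose_mat X * X = 1\<^sub>m k"
    using X by (auto simp: stiefel_def)
  show "c \<cdot>\<^sub>m X \<in> carrier_mat d k" "(1 / c) \<cdot>\<^sub>m transpose_mat X \<in> carrier_mat k d"
    using Xc by auto
  show "(1 / c) \<cdot>\<^sub>m transpose_mat X * (c \<cdot>\<^sub>m X) = 1\<^sub>m k"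
    using Xc orth c
    by (simp add: mult_smult_distrib[of _ k d _ k] mult_smult_assoc_mat[of _ k d _ k] smult_smult_mat)
qed

lemma index_mult_mat_vec_sum:
  assumes "A \<in> carrier_mat n m" "v \<in> carrier_vec m" "i < n"
  shows "(A *\<^sub>v v) $ i = (\<Sum>l<m. A $$ (i,l) * v $ l)"
  using assms by (simp add: scalar_prod_def atLeast0LessThan)

lemma scalar_prod_self_sum:
  "v \<in> carrier_vec k \<Longrightarrow> v \<bullet> v = (\<Sum>i<k. v $ i * v $ i)"
  by (simp add: scalar_prod_def atLeast0LessThan)

lemma vnorm_smult: "vnorm (c \<cdot>\<^sub>v v) = \<bar>c\<bar> * vnorm v"
proof -
  have "(c \<cdot>\<^sub>v v) \<bullet> (c \<cdot>\<^sub>v v) = (c * c) * (v \<bullet> v)"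
    by (simp add: scalar_prod_def sum_distrib_left algebra_simps)
  then show ?thesis
    by (simp add: vnorm_def real_sqrt_mult)
qed

lemma vnorm_unit_vec: "i < k \<Longrightarrow> vnorm (unit_vec k i) = 1"
  by (simp add: vnorm_def)

lemma abs_index_le_vnorm:
  assumes "v \<in> carrier_vec k" "i < k"
  shows "\<bar>v $ i\<bar> \<le> vnorm v"
proof -
  have "v $ i * v $ i \<le> (\<Sum>l<k. v $ l * v $ l)"
    using assms by (intro member_le_sum[where f = "\<lambda>l. v $ l * v $ l"]) auto
  then have "sqrt (v $ i * v $ i) \<le> sqrt (\<Sum>l<k. v $ l * v $ l)"
    by (rule real_sqrt_le_mono)
  then show ?thesis
    unfolding vnorm_def scalar_prod_self_sum[OF assms(1)] by simp
qed

lemma mat_diag_mult_vec: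
  assumes v: "v \<in> carrier_vec k"
  shows "mat_diag k a *\<^sub>v v = vec k (\<lambda>i. a i * v $ i)"
proof (rule eq_vecI)
  fix i assume "i < dim_vec (vec k (\<lambda>i. a i * v $ i))"
  then have i: "i < k" by simp
  have "(mat_diag k a *\<^sub>v v) $ i = (\<Sum>l<k. (if i = l then a l else 0) * v $ l)"
    using v i by (simp add: index_mult_mat_vec_sum[of _ k k] mat_diag_def del: index_mult_mat_vec)
  also have "\<dots> = a i * v $ i"
    using i by (subst sum.remove[of _ i]) auto
  finally show "(mat_diag k a *\<^sub>v v) $ i = vec k (\<lambda>i. a i * v $ i) $ i"
    using i by simp
qed (simp add: mat_diag_def)

lemma sigma_min_mat_diag:
  fixes a :: "nat \<Rightarrow> real"
  assumes i0: "i0 < k" and attained: "\<bar>a i0\<bar> = m" and bound: "\<And>i. i < k \<Longrightarrow> m \<le> \<bar>a i\<bar>"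
  shows "sigma_min (mat_diag k a) = m"
proof -
  have lower: "m \<le> vnorm (mat_diag k a *\<^sub>v v)" if v: "v \<in> carrier_vec k" "vnorm v = 1" for v
  proof -
    have "m * m * (\<Sum>i<k. v $ i * v $ i) = (\<Sum>i<k. (m * m) * (v $ i * v $ i))"
      by (simp add: sum_distrib_left)
    also have "\<dots> \<le> (\<Sum>i<k. (a i * v $ i) * (a i * v $ i))"
    proof (rule sum_mono)
      fix i assume "i \<in> {..<k}"
      then have "m * m \<le> \<bar>a i\<bar> * \<bar>a i\<bar>"
        using bound[of i] attained by (intro mult_mono) auto
      then show "m * m * (v $ i * v $ i) \<le> a i * v $ i * (a i * v $ i)"
        using mult_right_mono[of "m * m" "a i * a i" "v $ i * v $ i"] by (simp add: algebra_simps)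
    qed
    finally have "m * m \<le> (mat_diag k a *\<^sub>v v) \<bullet> (mat_diag k a *\<^sub>v v)"
      using v by (simp add: mat_diag_mult_vec scalar_prod_self_sum[of _ k] vnorm_def)
    then have "sqrt (m * m) \<le> vnorm (mat_diag k a *\<^sub>v v)"
      unfolding vnorm_def by (rule real_sqrt_le_mono)
    then show ?thesis
      using attained by auto
  qed
  have "vnorm (mat_diag k a *\<^sub>v unit_vec k i0) = m"
  proof -
    have "mat_diag k a *\<^sub>v unit_vec k i0 = a i0 \<cdot>\<^sub>v unit_vec k i0"
      using i0 by (intro eq_vecI) (auto simp: mat_diag_mult_vec)
    then show ?thesis
      using i0 attained by (simp add: vnorm_smult vnorm_unit_vec)
  qed
  moreover have "dim_col (mat_diag k a) = k"
    by (simp add: mat_diag_def)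
  ultimately show ?thesis
    unfolding sigma_min_def using i0 lower
    by (intro cInf_eq_minimum) (auto intro!: exI[of _ "unit_vec k i0"] simp: vnorm_unit_vec)
qed

lemma opnorm2_le:
  assumes "0 < dim_col M"
    and "\<And>v. v \<in> carrier_vec (dim_col M) \<Longrightarrow> vnorm v = 1 \<Longrightarrow> vnorm (M *\<^sub>v v) \<le> C"
  shows "opnorm2 M \<le> C"
  unfolding opnorm2_def using assms
  by (intro cSup_least) (auto intro!: exI[of _ "unit_vec (dim_col M) 0"] simp: vnorm_unit_vec)

definition single_entry_mat :: "nat \<Rightarrow> nat \<Rightarrow> nat \<Rightarrow> nat \<Rightarrow> real \<Rightarrow> real mat" where
  "single_entry_mat n m p q \<sigma> = mat n m (\<lambda>(i,j). if i = p \<and> j = q then \<sigma> else 0)"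

lemma single_entry_mat_carrier [simp]: "single_entry_mat n m p q \<sigma> \<in> carrier_mat n m"
  and single_entry_mat_dims [simp]:
    "dim_row (single_entry_mat n m p q \<sigma>) = n" "dim_col (single_entry_mat n m p q \<sigma>) = m"
  by (simp_all add: single_entry_mat_def)

lemma index_single_entry_mat [simp]:
  "i < n \<Longrightarrow> j < m \<Longrightarrow> single_entry_mat n m p q \<sigma> $$ (i,j) = (if i = p \<and> j = q then \<sigma> else 0)"
  by (simp add: single_entry_mat_def)

lemma single_entry_mat_mult_vec:
  assumes v: "v \<in> carrier_vec m" and "p < n" "q < m"
  shows "single_entry_mat n m p q \<sigma> *\<^sub>v v = (\<sigma> * v $ q) \<cdot>\<^sub>v unit_vec n p"
proof (rule eq_vecI)
  fix i assume "i < dim_vec ((\<sigma> * v $ q) \<cdot>\<^sub>v unit_vec n p)"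
  then have i: "i < n" by simp
  have "(single_entry_mat n m p q \<sigma> *\<^sub>v v) $ i = (\<Sum>l<m. (if i = p \<and> l = q then \<sigma> else 0) * v $ l)"
    using v i by (simp add: index_mult_mat_vec_sum[of _ n m] single_entry_mat_def del: index_mult_mat_vec)
  also have "\<dots> = (if i = p then \<sigma> * v $ q else 0)"
    using assms by (subst sum.remove[of _ q]) auto
  finally show "(single_entry_mat n m p q \<sigma> *\<^sub>v v) $ i = ((\<sigma> * v $ q) \<cdot>\<^sub>v unit_vec n p) $ i"
    using i by (auto simp: unit_vec_def)
qed simp

lemma opnorm2_single_entry_mat_le:
  assumes "p < n" "q < m"
  shows "opnorm2 (single_entry_mat n m p q \<sigma>) \<le> \<bar>\<sigma>\<bar>"
proof (rule opnorm2_le)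
  fix v assume "v \<in> carrier_vec (dim_col (single_entry_mat n m p q \<sigma>))" and unit: "vnorm v = 1"
  then have v: "v \<in> carrier_vec m"
    by simp
  then have "single_entry_mat n m p q \<sigma> *\<^sub>v v = (\<sigma> * v $ q) \<cdot>\<^sub>v unit_vec n p"
    using assms by (rule single_entry_mat_mult_vec)
  moreover have "\<bar>v $ q\<bar> \<le> 1"
    using abs_index_le_vnorm[OF v assms(2)] unit by simp
  ultimately show "vnorm (single_entry_mat n m p q \<sigma> *\<^sub>v v) \<le> \<bar>\<sigma>\<bar>"
    using assms by (simp add: vnorm_smult vnorm_unit_vec abs_mult mult_left_le)
qed (use assms in simp)

lemma Utop_dims [simp]: "dim_row (Utop d k) = d" "dim_col (Utop d k) = k"
  by (simp_all add: Utop_def)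

lemma Ubot_dims [simp]: "dim_row (Ubot d k) = d" "dim_col (Ubot d k) = d - k"
  by (simp_all add: Ubot_def)

lemma Utop_transpose_mult_index:
  assumes B: "B \<in> carrier_mat d m" and "k \<le> d" "i < k" "j < m"
  shows "(transpose_mat (Utop d k) * B) $$ (i,j) = B $$ (i,j)"
proof -
  have "(transpose_mat (Utop d k) * B) $$ (i,j) = (\<Sum>l<d. (if l = i then 1 else 0) * B $$ (l,j))"
    using assms by (simp add: index_mult_mat_sum[of _ k d _ m] Utop_def del: index_mult_mat(1))
  also have "\<dots> = B $$ (i,j)"
    using assms by (subst sum.remove[of _ i]) auto
  finally show ?thesis .
qed

lemma Ubot_transpose_mult_index:
  assumes B: "B \<in> carrier_mat d m" and "i < d - k" "j < m"
  shows "(transpose_mat (Ubot d k) * B) $$ (i,j) = B $$ (i + k, j)"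
proof -
  have "(transpose_mat (Ubot d k) * B) $$ (i,j) = (\<Sum>l<d. (if l = i + k then 1 else 0) * B $$ (l,j))"
    using assms by (simp add: index_mult_mat_sum[of _ "d - k" d _ m] Ubot_def del: index_mult_mat(1))
  also have "\<dots> = B $$ (i + k, j)"
    using assms by (subst sum.remove[of _ "i + k"]) auto
  finally show ?thesis .
qed

lemma Utop_transpose_mult_single_entry_mat:
  assumes "k \<le> d"
  shows "transpose_mat (Utop d k) * single_entry_mat d m k q \<sigma> = 0\<^sub>m k m"
  by (rule eq_matI)
    (use assms in \<open>auto simp: Utop_transpose_mult_index[of _ d m] simp del: index_mult_mat(1)\<close>)

lemma Ubot_transpose_mult_single_entry_mat:
  assumes "k < d"
  shows "transpose_mat (Ubot d k) * single_entry_mat d m k q \<sigma> = single_entry_mat (d - k) m 0 q \<sigma>"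
  by (rule eq_matI)
    (use assms in \<open>auto simp: Ubot_transpose_mult_index[of _ d m] simp del: index_mult_mat(1)\<close>)

lemma diagA_dims [simp]: "dim_row (diagA d k lam \<beta>) = d" "dim_col (diagA d k lam \<beta>) = d"
  by (simp_all add: diagA_def)

lemma diagA_eq_mat_diag: "diagA d k lam \<beta> = mat_diag d (\<lambda>i. if i < k then lam else 2 * sqrt \<beta>)"
  by (rule eq_matI) (auto simp: diagA_def mat_diag_def)

definition tilted_frame :: "nat \<Rightarrow> nat \<Rightarrow> real \<Rightarrow> real mat" where
  "tilted_frame d k \<phi> = mat d k (\<lambda>(i,j).
     if i = j then (if i = 0 then cos \<phi> else 1) else if i = k \<and> j = 0 then sin \<phi> else 0)"

lemma tilted_frame_carrier [simp]: "tilted_frame d k \<phi> \<in> carrier_mat d k"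
  and tilted_frame_dims [simp]: "dim_row (tilted_frame d k \<phi>) = d" "dim_col (tilted_frame d k \<phi>) = k"
  by (simp_all add: tilted_frame_def)

lemma index_tilted_frame [simp]:
  "i < d \<Longrightarrow> j < k \<Longrightarrow> tilted_frame d k \<phi> $$ (i,j)
    = (if i = j then (if i = 0 then cos \<phi> else 1) else if i = k \<and> j = 0 then sin \<phi> else 0)"
  by (simp add: tilted_frame_def)

lemma tilted_frame_stiefel:
  assumes "k < d"
  shows "tilted_frame d k \<phi> \<in> stiefel d k"
proof -
  let ?X = "tilted_frame d k \<phi>"
  have "transpose_mat ?X * ?X = 1\<^sub>m k"
  proof (rule eq_matI)
    fix i j assume "i < dim_row (1\<^sub>m k :: real mat)" "j < dim_col (1\<^sub>m k :: real mat)"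
    then have i: "i < k" and j: "j < k" by auto
    have "(transpose_mat ?X * ?X) $$ (i,j) = (\<Sum>l<d. ?X $$ (l,i) * ?X $$ (l,j))"
      using i j by (simp add: index_mult_mat_sum[of _ k d _ k] del: index_mult_mat(1))
    also have "\<dots> = (\<Sum>l<d. (if l = i then (if i = j then (if i = 0 then (cos \<phi>)\<^sup>2 else 1) else 0) else 0)
                 + (if l = k then (if i = 0 \<and> j = 0 then (sin \<phi>)\<^sup>2 else 0) else 0))"
      by (rule sum.cong) (use i j assms in \<open>auto simp: power2_eq_square\<close>)
    also have "\<dots> = 1\<^sub>m k $$ (i,j)"
      using i j assms by (simp add: sum.distrib)
    finally show "(transpose_mat ?X * ?X) $$ (i,j) = 1\<^sub>m k $$ (i,j)" .
  qed auto
  then show ?thesis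
    by (simp add: stiefel_def)
qed

lemma theta_tilted_frame:
  assumes "0 < k" "k < d" "0 \<le> \<phi>" "\<phi> \<le> pi / 2"
  shows "theta (Utop d k) (tilted_frame d k \<phi>) = \<phi>"
proof -
  have "transpose_mat (Utop d k) * tilted_frame d k \<phi> = mat_diag k (\<lambda>i. if i = 0 then cos \<phi> else 1)"
    by (rule eq_matI)
      (use assms in \<open>auto simp: Utop_transpose_mult_index[of _ d k] mat_diag_def
        simp del: index_mult_mat(1)\<close>)
  moreover have "0 \<le> cos \<phi>"
    using assms by (intro cos_ge_zero) auto
  ultimately have "sigma_min (transpose_mat (Utop d k) * tilted_frame d k \<phi>) = cos \<phi>"
    using assms by (auto intro: sigma_min_mat_diag)
  then show ?thesis
    using assms by (simp add: theta_def arccos_cos)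
qed

lemma diagA_mult_tilted_frame_index:
  assumes "k < d" "i < d" "j < k"
  shows "(diagA d k lam \<beta> * tilted_frame d k \<phi>) $$ (i,j)
       = (if i < k then lam else 2 * sqrt \<beta>) * tilted_frame d k \<phi> $$ (i,j)"
  using assms by (simp add: diagA_eq_mat_diag mat_diag_mult_left[of _ d k] del: index_mult_mat(1))

lemma diagA_tilted_frame_first_step:
  assumes "k < d"
  shows "(1/2) \<cdot>\<^sub>m (diagA d k lam \<beta> * tilted_frame d k \<phi>)
      + single_entry_mat d k k 0 ((lam - 2 * sqrt \<beta>) * sin \<phi> / 2) = (lam / 2) \<cdot>\<^sub>m tilted_frame d k \<phi>"
  by (rule eq_matI)
    (use assms in \<open>auto simp: diagA_mult_tilted_frame_index field_simps simp del: index_mult_mat(1)\<close>)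

lemma diagA_tilted_frame_step:
  assumes "k < d"
  shows "diagA d k lam \<beta> * tilted_frame d k \<phi> - \<mu> \<cdot>\<^sub>m tilted_frame d k \<phi>
      + single_entry_mat d k k 0 ((lam - 2 * sqrt \<beta>) * sin \<phi>) = (lam - \<mu>) \<cdot>\<^sub>m tilted_frame d k \<phi>"
  by (rule eq_matI)
    (use assms in \<open>auto simp: diagA_mult_tilted_frame_index algebra_simps simp del: index_mult_mat(1)\<close>)

context
  fixes d k :: nat and A :: "real mat" and \<beta> :: real and X0 :: "real mat" and \<Xi> :: "nat \<Rightarrow> real mat"
    and r :: "nat \<Rightarrow> real"
  assumes X0: "X0 \<in> stiefel d k" and r_pos: "\<And>t. 0 < r t"
    and first_step: "(1/2) \<cdot>\<^sub>m (A * X0) + \<Xi> 0 = r 0 \<cdot>\<^sub>m X0"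
    and next_step: "\<And>t. A * X0 - (\<beta> / r t) \<cdot>\<^sub>m X0 + \<Xi> (Suc t) = r (Suc t) \<cdot>\<^sub>m X0"
begin

lemma momentum_term_stationary: "\<beta> \<cdot>\<^sub>m (X0 * minv (r t \<cdot>\<^sub>m 1\<^sub>m k)) = (\<beta> / r t) \<cdot>\<^sub>m X0"
proof -
  have "X0 * minv (r t \<cdot>\<^sub>m 1\<^sub>m k) = (1 / r t) \<cdot>\<^sub>m X0"
    using X0 r_pos[of t] mult_smult_one_mat[of X0 d k] by (simp add: minv_smult_one stiefel_def)
  then show ?thesis
    by (simp add: smult_smult_mat)
qed

lemma anpm_aux_stationary:
  "fst (fst (anpm_aux A \<beta> X0 \<Xi> t)) = X0 \<and> snd (anpm_aux A \<beta> X0 \<Xi> t) = (X0, r t \<cdot>\<^sub>m 1\<^sub>m k)"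
proof (induction t)
  case 0
  then show ?case
    using QR_smult_stiefel[OF X0 r_pos] first_step by simp
next
  case (Suc t)
  then show ?case
    using QR_smult_stiefel[OF X0 r_pos] next_step[of t] by (simp add: Let_def momentum_term_stationary)
qed

lemma anpm_X_stationary: "anpm_X A \<beta> X0 \<Xi> t = X0"
  using anpm_aux_stationary by (simp add: anpm_X_def)

lemma anpm_Y_stationary: "anpm_Y A \<beta> X0 \<Xi> t = r t \<cdot>\<^sub>m X0"
proof (cases t)
  case 0
  then show ?thesis
    using first_step by (simp add: anpm_Y_def)
next
  case (Suc n)
  then show ?thesis
    using anpm_aux_stationary[of n] next_step[of n] by (simp add: anpm_Y_def momentum_term_stationary)
qed

end

primrec stationary_scale :: "real \<Rightarrow> real \<Rightarrow> nat \<Rightarrow> real" where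
  "stationary_scale lam \<beta> 0 = lam / 2"
| "stationary_scale lam \<beta> (Suc t) = lam - \<beta> / stationary_scale lam \<beta> t"

lemma stationary_scale_gt_sqrt:
  assumes "0 < \<beta>" "2 * sqrt \<beta> < lam"
  shows "sqrt \<beta> < stationary_scale lam \<beta> t"
proof (induction t)
  case 0
  then show ?case
    using assms by simp
next
  case (Suc t)
  have "0 < sqrt \<beta>"
    using assms by simp
  moreover have "0 < stationary_scale lam \<beta> t"
    using Suc calculation by linarith
  ultimately have "\<beta> / stationary_scale lam \<beta> t < \<beta> / sqrt \<beta>"
    using Suc assms by (intro divide_strict_left_mono mult_pos_pos)
  also have "\<dots> = sqrt \<beta>"
    using assms by (simp add: real_div_sqrt)
  finally show ?case
    using assms by simp
qed

lemma stationary_scale_pos: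
  assumes "0 < \<beta>" "2 * sqrt \<beta> < lam"
  shows "0 < stationary_scale lam \<beta> t"
  using stationary_scale_gt_sqrt[OF assms, of t] real_sqrt_ge_zero[of \<beta>] assms(1) by linarith

text \<open>Halved at \<open>t = 0\<close> because the first ANPM step uses \<open>A X\<^sub>0 / 2\<close>.\<close>

definition compensating_perturbation :: "nat \<Rightarrow> nat \<Rightarrow> real \<Rightarrow> real \<Rightarrow> real \<Rightarrow> nat \<Rightarrow> real mat" where
  "compensating_perturbation d k lam \<beta> \<phi> t =
     single_entry_mat d k k 0 ((if t = 0 then 1/2 else 1) * (lam - 2 * sqrt \<beta>) * sin \<phi>)"

lemma anpm_tilted_frame:
  assumes "k < d" "0 < \<beta>" "2 * sqrt \<beta> < lam"
  shows "anpm_X (diagA d k lam \<beta>) \<beta> (tilted_frame d k \<phi>) (compensating_perturbation d k lam \<beta> \<phi>) t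
           = tilted_frame d k \<phi>"
    and "anpm_Y (diagA d k lam \<beta>) \<beta> (tilted_frame d k \<phi>) (compensating_perturbation d k lam \<beta> \<phi>) t
           = stationary_scale lam \<beta> t \<cdot>\<^sub>m tilted_frame d k \<phi>"
proof -
  have r_pos: "0 < stationary_scale lam \<beta> t" for t
    using stationary_scale_pos[OF assms(2,3)] .
  have first: "(1/2) \<cdot>\<^sub>m (diagA d k lam \<beta> * tilted_frame d k \<phi>) + compensating_perturbation d k lam \<beta> \<phi> 0
      = stationary_scale lam \<beta> 0 \<cdot>\<^sub>m tilted_frame d k \<phi>"
    using diagA_tilted_frame_first_step[OF assms(1)] by (simp add: compensating_perturbation_def)
  have step: "diagA d k lam \<beta> * tilted_frame d k \<phi> - (\<beta> / stationary_scale lam \<beta> t) \<cdot>\<^sub>m tilted_frame d k \<phi>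
      + compensating_perturbation d k lam \<beta> \<phi> (Suc t) = stationary_scale lam \<beta> (Suc t) \<cdot>\<^sub>m tilted_frame d k \<phi>" for t
    using diagA_tilted_frame_step[OF assms(1)] by (simp add: compensating_perturbation_def)
  show "anpm_X (diagA d k lam \<beta>) \<beta> (tilted_frame d k \<phi>) (compensating_perturbation d k lam \<beta> \<phi>) t
      = tilted_frame d k \<phi>"
    by (rule anpm_X_stationary[OF tilted_frame_stiefel[OF assms(1)] r_pos first step])
  show "anpm_Y (diagA d k lam \<beta>) \<beta> (tilted_frame d k \<phi>) (compensating_perturbation d k lam \<beta> \<phi>) t
      = stationary_scale lam \<beta> t \<cdot>\<^sub>m tilted_frame d k \<phi>"
    by (rule anpm_Y_stationary[OF tilted_frame_stiefel[OF assms(1)] r_pos first step])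
qed

lemma compensating_perturbation_carrier [simp]: "compensating_perturbation d k lam \<beta> \<phi> t \<in> carrier_mat d k"
  by (simp add: compensating_perturbation_def)

lemma opnorm2_Ubot_compensating_perturbation:
  assumes "0 < k" "k < d" "2 * sqrt \<beta> \<le> lam" "0 \<le> sin \<phi>"
  shows "opnorm2 (transpose_mat (Ubot d k) * compensating_perturbation d k lam \<beta> \<phi> t)
           \<le> (lam - 2 * sqrt \<beta>) * sin \<phi>"
proof -
  define \<sigma> where "\<sigma> = (if t = 0 then 1/2 else 1) * (lam - 2 * sqrt \<beta>) * sin \<phi>"
  have "transpose_mat (Ubot d k) * compensating_perturbation d k lam \<beta> \<phi> t = single_entry_mat (d - k) k 0 0 \<sigma>"
    using assms by (simp add: compensating_perturbation_def Ubot_transpose_mult_single_entry_mat \<sigma>_def)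
  moreover have "opnorm2 (single_entry_mat (d - k) k 0 0 \<sigma>) \<le> \<bar>\<sigma>\<bar>"
    using assms by (intro opnorm2_single_entry_mat_le) auto
  moreover have "\<bar>\<sigma>\<bar> \<le> (lam - 2 * sqrt \<beta>) * sin \<phi>"
    using assms by (simp add: \<sigma>_def abs_mult)
  ultimately show ?thesis
    by simp
qed

lemma sin_arctan_le:
  assumes "0 \<le> x"
  shows "sin (arctan x) \<le> x"
proof -
  have "x / sqrt (1 + x\<^sup>2) \<le> x / 1"
    using assms by (intro divide_left_mono) (auto intro: add_pos_nonneg)
  then show ?thesis
    by (simp add: sin_arctan)
qed

theorem theorem3:
  fixes d k :: nat and \<beta> lam \<epsilon> :: real
  assumes "1 \<le> k" "k < d" "\<beta> > 0" "lam > 2 * sqrt \<beta>" "0 < \<epsilon>" "\<epsilon> < 1"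
  shows "\<exists>X0 \<Xi>. X0 \<in> stiefel d k \<and> cos (theta (Utop d k) X0) > 0
     \<and> (\<forall>t. \<Xi> t \<in> carrier_mat d k
            \<and> transpose_mat (Utop d k) * \<Xi> t = 0\<^sub>m k k
            \<and> opnorm2 (transpose_mat (Ubot d k) * \<Xi> t) \<le> 8 * (lam - 2 * sqrt \<beta>) * \<epsilon>)
     \<and> (\<forall>t. full_col_rank (anpm_Y (diagA d k lam \<beta>) \<beta> X0 \<Xi> t))
     \<and> (\<forall>t. tan (theta (Utop d k) (anpm_X (diagA d k lam \<beta>) \<beta> X0 \<Xi> t)) > \<epsilon>)"
proof -
  define \<phi> where "\<phi> = arctan (2 * \<epsilon>)"
  let ?X0 = "tilted_frame d k \<phi>" and ?\<Xi> = "compensating_perturbation d k lam \<beta> \<phi>"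
  have \<phi>: "0 < \<phi>" "\<phi> < pi / 2" "tan \<phi> = 2 * \<epsilon>"
    using assms arctan_bounded[of "2 * \<epsilon>"] by (simp_all add: \<phi>_def tan_arctan)
  have sin_\<phi>: "0 \<le> sin \<phi>" "sin \<phi> \<le> 2 * \<epsilon>"
    using \<phi> assms sin_arctan_le[of "2 * \<epsilon>"] by (auto intro!: sin_ge_zero simp: \<phi>_def[symmetric])
  have theta: "theta (Utop d k) ?X0 = \<phi>"
    using assms \<phi> by (intro theta_tilted_frame) auto
  have "transpose_mat (Utop d k) * ?\<Xi> t = 0\<^sub>m k k" for t
    using assms by (simp add: compensating_perturbation_def Utop_transpose_mult_single_entry_mat)
  moreover have "opnorm2 (transpose_mat (Ubot d k) * ?\<Xi> t) \<le> 8 * (lam - 2 * sqrt \<beta>) * \<epsilon>" for t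
  proof -
    have "opnorm2 (transpose_mat (Ubot d k) * ?\<Xi> t) \<le> (lam - 2 * sqrt \<beta>) * sin \<phi>"
      using assms sin_\<phi> by (intro opnorm2_Ubot_compensating_perturbation) auto
    also have "\<dots> \<le> (lam - 2 * sqrt \<beta>) * (8 * \<epsilon>)"
      using assms sin_\<phi> by (intro mult_left_mono) auto
    finally show ?thesis
      by (simp add: mult_ac)
  qed
  moreover have "full_col_rank (anpm_Y (diagA d k lam \<beta>) \<beta> ?X0 ?\<Xi> t)" for t
    unfolding anpm_tilted_frame(2)[OF assms(2-4)] using assms stationary_scale_pos[of \<beta> lam t]
    by (intro full_col_rank_smult_stiefel[OF tilted_frame_stiefel]) auto
  moreover have "tan (theta (Utop d k) (anpm_X (diagA d k lam \<beta>) \<beta> ?X0 ?\<Xi> t)) = 2 * \<epsilon>" for t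
    using assms \<phi> theta by (simp add: anpm_tilted_frame)
  ultimately show ?thesis
    using assms \<phi> theta tilted_frame_stiefel[of k d \<phi>]
    by (intro exI[of _ ?X0] exI[of _ ?\<Xi>]) (auto intro: cos_gt_zero)
qed

end
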